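(* Let $\Omega_x=(x_L,x_R)$, $\mathcal T>0$, $\varepsilon>0$, and let $\sigma_s(x)>0$, $\sigma_a(x)\ge 0$. Let $(\rho(x,t),g(x,v,t))$ be a (sufficiently smooth) solution on $\Omega_x\times(0,\mathcal T]$, $v\in\Omega_v$, of the micro-macro system $$\partial_t\rho+\partial_x\langle vg\rangle=-\sigma_a\rho,\qquad \partial_t g+\tfrac1\varepsilon v\partial_x g-\tfrac1\varepsilon\langle v\partial_x g\rangle+\tfrac1{\varepsilon^2}v\partial_x\rho=-\Big(\tfrac{\sigma_s}{\varepsilon^2}+\sigma_a\Big)g,$$ supplemented either with periodic boundary conditions in $x$, or with the homogeneous Dirichlet conditions $\rho(x_L,t)+\varepsilon g(x_L,v,t)=0$ for $v>0$ and $\rho(x_R,t)+\varepsilon g(x_R,v,t)=0$ for $v<0$. If the initial values satisfy $\langle g\rangle|_{t=0}=0$, then $$\|\rho(\cdot,\mathcal T)\|^2_{L^2(\Omega_x)}+\varepsilon^2\vert\!\vert\!\vert g(\cdot,\cdot,\mathcal T)\vert\!\vert\!\vert^2\le -2\int_0^{\mathcal T}\Big(\int_{\Omega_x}\sigma_a\rho^2\,dx+\Big\langle\int_{\Omega_x}(\sigma_s+\varepsilon^2\sigma_a)g^2\,dx\Big\rangle\Big)dt+\|\rho(\cdot,0)\|^2_{L^2(\Omega_x)}+\varepsilon^2\vert\!\vert\!\vert g(\cdot,\cdot,0)\vert\!\vert\!\vert^2,$$ with equality in the case of periodic boundary conditions.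
   Context: The velocity space $\Omega_v$ is bounded and carries a measure $\nu$; for a function $\varphi$ of $v$ (possibly also of $x,t$), $\langle\varphi\rangle=\int_{\Omega_v}\varphi\,d\nu$. It is assumed that $\langle 1\rangle=1$ and $\langle v\rangle=0$ (e.g. $\Omega_v=\{-1,1\}$ with $\langle f\rangle=\frac12(f|_{v=-1}+f|_{v=1})$, or $\Omega_v=[-1,1]$ with $\langle f\rangle=\frac12\int_{-1}^1 f\,dv$). The norm $\vert\!\vert\!\vert\varphi\vert\!\vert\!\vert$ is defined by $\vert\!\vert\!\vert\varphi\vert\!\vert\!\vert^2=\langle\|\varphi\|^2_{L^2(\Omega_x)}\rangle$, i.e. the $L^2$ norm in $x$ squared, averaged over velocity. *)

theory Defs
  imports "HOL-Probability.Probability"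
begin

definition vavg :: "real measure \<Rightarrow> (real \<Rightarrow> real) \<Rightarrow> real" where
  "vavg nu \<phi> = integral\<^sup>L nu \<phi>"

definition L2sq :: "real \<Rightarrow> real \<Rightarrow> (real \<Rightarrow> real) \<Rightarrow> real" where
  "L2sq a b f = integral {a..b} (\<lambda>x. (f x)\<^sup>2)"

definition tnormsq :: "real measure \<Rightarrow> real \<Rightarrow> real \<Rightarrow> (real \<Rightarrow> real \<Rightarrow> real) \<Rightarrow> real" where
  "tnormsq nu a b \<phi> = vavg nu (\<lambda>v. L2sq a b (\<lambda>x. \<phi> x v))"

end

theory Submission
  imports Defs
begin

text \<open>Multiplying the macro equation by \<open>\<rho>\<close> and the micro equation by \<open>\<epsilon>\<^sup>2 g\<close> and
  integrating, the coupling terms \<open>\<integral> \<rho>\<^sub>x \<langle>v g\<rangle>\<close> cancel after an integration by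
  parts in \<open>x\<close>, while \<open>\<langle>v \<partial>\<^sub>x g\<rangle>\<close> only meets \<open>\<langle>g\<rangle>\<close>, which vanishes identically:
  averaging the micro equation over \<open>v\<close> (using \<open>\<langle>v\<rangle> = 0\<close>) gives the linear ODE
  \<open>\<partial>\<^sub>t\<langle>g\<rangle> = -(\<sigma>\<^sub>s/\<epsilon>\<^sup>2 + \<sigma>\<^sub>a)\<langle>g\<rangle>\<close> with zero initial value. What remains is
  \<open>E' = -2 D + F\<close>, with the boundary flux \<open>F = (\<langle>v(\<rho>+\<epsilon>g)\<^sup>2\<rangle>(x\<^sub>L) - \<langle>v(\<rho>+\<epsilon>g)\<^sup>2\<rangle>(x\<^sub>R))/\<epsilon>\<close>.
  \<open>F\<close> vanishes for periodic data and is nonpositive under the inflow conditions, since only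
  \<open>v \<le> 0\<close> contributes at \<open>x\<^sub>L\<close> and only \<open>v \<ge> 0\<close> at \<open>x\<^sub>R\<close>.\<close>

section \<open>Integrals depending on a parameter\<close>

lemma borel_measurable_continuous_on_restrict_sets:
  assumes "sets M = sets (restrict_space borel V)" "continuous_on V f"
  shows "f \<in> borel_measurable M"
  by (subst measurable_cong_sets[OF assms(1) refl])
     (rule borel_measurable_continuous_on_restrict[OF assms(2)])

lemma integrable_continuous_on_bounded:
  fixes f :: "'a::topological_space \<Rightarrow> real"
  assumes "finite_measure M" "space M = V" "sets M = sets (restrict_space borel V)"
    and "continuous_on V f" "\<And>v. v \<in> V \<Longrightarrow> \<bar>f v\<bar> \<le> B"
  shows "integrable M f"
  by (rule finite_measure.integrable_const_bound[OF assms(1), where B=B])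
     (use assms borel_measurable_continuous_on_restrict_sets in auto)

lemma (in finite_measure) has_real_derivative_integral:
  fixes f f' :: "real \<Rightarrow> 'a \<Rightarrow> real"
  assumes S: "convex S" "s0 \<in> S"
    and f': "\<And>s v. s \<in> S \<Longrightarrow> v \<in> space M \<Longrightarrow> ((\<lambda>s. f s v) has_real_derivative f' s v) (at s within S)"
    and f'_bound: "\<And>s v. s \<in> S \<Longrightarrow> v \<in> space M \<Longrightarrow> \<bar>f' s v\<bar> \<le> B"
    and integrable: "\<And>s. s \<in> S \<Longrightarrow> integrable M (f s)"
    and f'_measurable: "f' s0 \<in> borel_measurable M"
  shows "((\<lambda>s. \<integral>v. f s v \<partial>M) has_real_derivative (\<integral>v. f' s0 v \<partial>M)) (at s0 within S)"
  unfolding has_field_derivative_iff tendsto_at_iff_sequentially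
proof (intro allI impI)
  fix X :: "nat \<Rightarrow> real" assume X: "\<forall>i. X i \<in> S - {s0}" "X \<longlonglongrightarrow> s0"
  define q where "q i v = (f (X i) v - f s0 v) / (X i - s0)" for i v
  have quotient_eq: "((\<lambda>s. ((\<integral>v. f s v \<partial>M) - (\<integral>v. f s0 v \<partial>M)) / (s - s0)) \<circ> X) i = (\<integral>v. q i v \<partial>M)"
    for i
  proof -
    have "X i \<in> S" using X(1) by auto
    then show ?thesis
      unfolding q_def integral_divide_zero
      using integrable[of "X i"] integrable[OF S(2)] by (simp add: integral_diff)
  qed
  have "(\<lambda>i. \<integral>v. q i v \<partial>M) \<longlonglongrightarrow> (\<integral>v. f' s0 v \<partial>M)"
  proof (rule integral_dominated_convergence[where w="\<lambda>_. B"])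
    show "q i \<in> borel_measurable M" for i
      unfolding q_def using integrable X(1) S(2) by (intro borel_measurable_divide borel_measurable_diff) auto
    show "AE v in M. (\<lambda>i. q i v) \<longlonglongrightarrow> f' s0 v"
    proof (rule AE_I2)
      fix v assume v: "v \<in> space M"
      have "((\<lambda>s. (f s v - f s0 v) / (s - s0)) \<longlongrightarrow> f' s0 v) (at s0 within S)"
        using f'[OF S(2) v] unfolding has_field_derivative_iff .
      then show "(\<lambda>i. q i v) \<longlonglongrightarrow> f' s0 v"
        unfolding tendsto_at_iff_sequentially q_def using X by (auto simp: comp_def)
    qed
    show "AE v in M. norm (q i v) \<le> B" for i
    proof (rule AE_I2)
      fix v assume v: "v \<in> space M"
      have "norm (f (X i) v - f s0 v) \<le> B * norm (X i - s0)"
        by (rule field_differentiable_bound[OF S(1), where f="\<lambda>s. f s v" and f'="\<lambda>s. f' s v"])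
           (use f' v f'_bound X S in auto)
      moreover have "X i \<noteq> s0" using X by auto
      ultimately show "norm (q i v) \<le> B"
        unfolding q_def by (simp add: divide_le_eq)
    qed
  qed (use f'_measurable in auto)
  then show "((\<lambda>s. ((\<integral>v. f s v \<partial>M) - (\<integral>v. f s0 v \<partial>M)) / (s - s0)) \<circ> X) \<longlonglongrightarrow> (\<integral>v. f' s0 v \<partial>M)"
    unfolding quotient_eq .
qed

lemma (in finite_measure) continuous_on_integral:
  fixes h :: "'b::metric_space \<Rightarrow> 'a \<Rightarrow> real"
  assumes "\<And>v. v \<in> space M \<Longrightarrow> continuous_on S (\<lambda>s. h s v)"
    and "\<And>s v. s \<in> S \<Longrightarrow> v \<in> space M \<Longrightarrow> \<bar>h s v\<bar> \<le> B"
    and "\<And>s. s \<in> S \<Longrightarrow> h s \<in> borel_measurable M"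
  shows "continuous_on S (\<lambda>s. \<integral>v. h s v \<partial>M)"
proof (rule continuous_on_sequentiallyI)
  fix u a assume u: "\<forall>n. u n \<in> S" "a \<in> S" "u \<longlonglongrightarrow> a"
  show "(\<lambda>n. \<integral>v. h (u n) v \<partial>M) \<longlonglongrightarrow> (\<integral>v. h a v \<partial>M)"
  proof (rule integral_dominated_convergence[where w="\<lambda>_. B"])
    show "AE v in M. (\<lambda>i. h (u i) v) \<longlonglongrightarrow> h a v"
      using assms(1) u by (auto intro!: AE_I2 simp: continuous_on_sequentially comp_def)
  qed (use assms u in \<open>auto intro!: AE_I2\<close>)
qed

lemma continuous_on_interval_integral:
  fixes F :: "real \<Rightarrow> 'a::topological_space \<Rightarrow> real"
  assumes "continuous_on ({a..b} \<times> U) (\<lambda>(x, u). F x u)"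
  shows "continuous_on U (\<lambda>u. integral {a..b} (\<lambda>x. F x u))"
  using integral_continuous_on_param[of U a b "\<lambda>u x. F x u"] continuous_on_swap_args[OF assms]
  by (simp add: split_beta')

text \<open>Fubini for a continuous bounded integrand: both sides have derivative
  \<open>\<integral>v. h y v \<partial>M\<close> in the upper limit \<open>y\<close> and vanish at \<open>y = a\<close>.\<close>
lemma integral_interval_integral_swap:
  fixes h :: "real \<Rightarrow> 'a::topological_space \<Rightarrow> real"
  assumes M: "finite_measure M" "space M = V" "sets M = sets (restrict_space borel V)" and "a \<le> b"
    and cont: "continuous_on ({a..b} \<times> V) (\<lambda>(x, v). h x v)"
    and h_bound: "\<And>x v. x \<in> {a..b} \<Longrightarrow> v \<in> V \<Longrightarrow> \<bar>h x v\<bar> \<le> B"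
  shows "(\<integral>v. integral {a..b} (\<lambda>x. h x v) \<partial>M) = integral {a..b} (\<lambda>x. \<integral>v. h x v \<partial>M)"
proof -
  define F where "F y = (\<integral>v. integral {a..y} (\<lambda>x. h x v) \<partial>M)" for y
  have cont_x: "continuous_on {a..b} (\<lambda>x. h x v)" if "v \<in> V" for v
    by (rule continuous_on_compose2[OF cont, where f="\<lambda>x. (x, v)", simplified])
       (use that in \<open>auto intro!: continuous_intros\<close>)
  have cont_v: "continuous_on V (\<lambda>v. h x v)" if "x \<in> {a..b}" for x
    by (rule continuous_on_compose2[OF cont, where f="\<lambda>v. (x, v)", simplified])
       (use that in \<open>auto intro!: continuous_intros\<close>)
  have F': "(F has_real_derivative (\<integral>v. h y v \<partial>M)) (at y within {a..b})" if y: "y \<in> {a..b}" for y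
    unfolding F_def
  proof (rule finite_measure.has_real_derivative_integral[OF M(1) convex_real_interval(5) y, where B=B])
    show "((\<lambda>s. integral {a..s} (\<lambda>x. h x v)) has_real_derivative h s v) (at s within {a..b})"
      if "s \<in> {a..b}" "v \<in> space M" for s v
      by (rule integral_has_real_derivative) (use that cont_x M in auto)
    show "integrable M (\<lambda>v. integral {a..s} (\<lambda>x. h x v))" if s: "s \<in> {a..b}" for s
    proof (rule integrable_continuous_on_bounded[OF M])
      show "continuous_on V (\<lambda>v. integral {a..s} (\<lambda>x. h x v))"
        by (rule continuous_on_interval_integral, rule continuous_on_subset[OF cont]) (use s in auto)
      show "\<bar>integral {a..s} (\<lambda>x. h x v)\<bar> \<le> \<bar>B\<bar> * (b - a)" if v: "v \<in> V" for v
      proof -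
        have "\<bar>integral {a..s} (\<lambda>x. h x v)\<bar> \<le> B * (s - a)"
          using integral_bound[of a s "\<lambda>x. h x v" B] s v h_bound
            continuous_on_subset[OF cont_x[OF v], of "{a..s}"] by auto
        also have "\<dots> \<le> \<bar>B\<bar> * (b - a)" using s by (intro mult_mono) auto
        finally show ?thesis .
      qed
    qed
  qed (use h_bound M borel_measurable_continuous_on_restrict_sets[OF M(3) cont_v[OF y]] in auto)
  have "((\<lambda>y. \<integral>v. h y v \<partial>M) has_integral (F b - F a)) {a..b}"
    by (rule fundamental_theorem_of_calculus[OF \<open>a \<le> b\<close>])
       (use F' in \<open>auto simp: has_real_derivative_iff_has_vector_derivative\<close>)
  then show ?thesis unfolding F_def by (simp add: integral_unique)
qed

lemma has_real_derivative_L2sq: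
  fixes f f_t :: "real \<Rightarrow> real \<Rightarrow> real"
  assumes "convex S" "t \<in> S"
    and f_t: "\<And>x s. x \<in> {a..b} \<Longrightarrow> s \<in> S \<Longrightarrow> ((\<lambda>s. f x s) has_real_derivative f_t x s) (at s within S)"
    and cont: "continuous_on ({a..b} \<times> S) (\<lambda>(x, s). f x s)"
    and cont_t: "continuous_on ({a..b} \<times> S) (\<lambda>(x, s). f_t x s)"
  shows "((\<lambda>s. L2sq a b (\<lambda>x. f x s)) has_real_derivative
           integral {a..b} (\<lambda>x. 2 * f x t * f_t x t)) (at t within S)"
proof -
  have swap: "continuous_on (S \<times> {a..b}) (\<lambda>(s, x). F x s)"
    if "continuous_on ({a..b} \<times> S) (\<lambda>(x, s). F x s)" for F :: "real \<Rightarrow> real \<Rightarrow> real"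
    using continuous_on_swap_args[OF that] by simp
  have "((\<lambda>s. integral (cbox a b) (\<lambda>x. (f x s)\<^sup>2)) has_field_derivative
      integral (cbox a b) (\<lambda>x. 2 * f x t * f_t x t)) (at t within S)"
  proof (rule leibniz_rule_field_derivative[OF _ _ _ assms(2,1)])
    show "((\<lambda>s. (f x s)\<^sup>2) has_field_derivative 2 * f x s * f_t x s) (at s within S)"
      if "s \<in> S" "x \<in> cbox a b" for s x
      using that f_t[of x s] by (auto intro!: derivative_eq_intros)
    show "(\<lambda>x. (f x s)\<^sup>2) integrable_on cbox a b" if "s \<in> S" for s
      by (rule integrable_continuous, rule continuous_on_power,
          rule continuous_on_compose2[OF cont, where f="\<lambda>x. (x, s)", simplified])
         (use that in \<open>auto intro!: continuous_intros\<close>)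
    show "continuous_on (S \<times> cbox a b) (\<lambda>(s, x). 2 * f x s * f_t x s)"
      using swap[OF cont] swap[OF cont_t] unfolding split_beta' by (auto intro!: continuous_intros)
  qed
  then show ?thesis unfolding L2sq_def by simp
qed

lemma linear_ode_zero:
  fixes G :: "real \<Rightarrow> real"
  assumes "continuous_on {0..T} G"
    and "\<And>s. s \<in> {0<..<T} \<Longrightarrow> (G has_real_derivative - k * G s) (at s)"
    and "G 0 = 0" "t \<in> {0..T}"
  shows "G t = 0"
proof (cases "t = 0")
  case False
  then have "0 < t" using assms(4) by auto
  define H where "H s = exp (k * s) * G s" for s
  have "H t = H 0"
  proof (rule DERIV_isconst_end[OF \<open>0 < t\<close>])
    show "continuous_on {0..t} H" unfolding H_def
      by (intro continuous_intros continuous_on_subset[OF assms(1)]) (use assms(4) in auto)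
    fix s assume "0 < s" "s < t"
    then have "(H has_real_derivative (k * exp (k * s) * G s + exp (k * s) * (- k * G s))) (at s)"
      unfolding H_def using assms(2)[of s] assms(4) by (auto intro!: derivative_eq_intros)
    then show "(H has_real_derivative 0) (at s)" by (simp add: algebra_simps)
  qed
  then show ?thesis using assms(3) by (simp add: H_def)
qed (use assms in simp)

lemma abs_mult_le_mult: "\<bar>a\<bar> \<le> A \<Longrightarrow> \<bar>b\<bar> \<le> B \<Longrightarrow> \<bar>a * b\<bar> \<le> (A::real) * B"
  unfolding abs_mult by (rule mult_mono') auto

section \<open>The micro-macro system\<close>

locale micro_macro =
  fixes xL xR T \<epsilon> :: real
    and V :: "real set" and nu :: "real measure"
    and ss sa :: "real \<Rightarrow> real"
    and rho rho_t rho_x :: "real \<Rightarrow> real \<Rightarrow> real"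
    and g g_t g_x :: "real \<Rightarrow> real \<Rightarrow> real \<Rightarrow> real"
  assumes dom: "xL < xR" and T_pos: "T > 0" and eps_pos: "\<epsilon> > 0"
    and V_bounded: "bounded V"
    and nu_space: "space nu = V"
    and nu_sets: "sets nu = sets (restrict_space borel V)"
    and nu_prob: "prob_space nu"
    and nu_mean: "vavg nu (\<lambda>v. v) = 0"
    and ss_cont: "continuous_on {xL..xR} ss"
    and sa_cont: "continuous_on {xL..xR} sa"
    and rho_dt: "\<And>x t. x \<in> {xL..xR} \<Longrightarrow> t \<in> {0..T} \<Longrightarrow>
        ((\<lambda>s. rho x s) has_real_derivative rho_t x t) (at t within {0..T})"
    and rho_dx: "\<And>x t. x \<in> {xL..xR} \<Longrightarrow> t \<in> {0..T} \<Longrightarrow>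
        ((\<lambda>y. rho y t) has_real_derivative rho_x x t) (at x within {xL..xR})"
    and rho_cont: "continuous_on ({xL..xR} \<times> {0..T}) (\<lambda>(x, t). rho x t)"
    and rho_t_cont: "continuous_on ({xL..xR} \<times> {0..T}) (\<lambda>(x, t). rho_t x t)"
    and rho_x_cont: "continuous_on ({xL..xR} \<times> {0..T}) (\<lambda>(x, t). rho_x x t)"
    and g_dt: "\<And>x v t. x \<in> {xL..xR} \<Longrightarrow> v \<in> V \<Longrightarrow> t \<in> {0..T} \<Longrightarrow>
        ((\<lambda>s. g x v s) has_real_derivative g_t x v t) (at t within {0..T})"
    and g_dx: "\<And>x v t. x \<in> {xL..xR} \<Longrightarrow> v \<in> V \<Longrightarrow> t \<in> {0..T} \<Longrightarrow>
        ((\<lambda>y. g y v t) has_real_derivative g_x x v t) (at x within {xL..xR})"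
    and g_cont: "continuous_on ({xL..xR} \<times> V \<times> {0..T}) (\<lambda>(x, v, t). g x v t)"
    and g_t_cont: "continuous_on ({xL..xR} \<times> V \<times> {0..T}) (\<lambda>(x, v, t). g_t x v t)"
    and g_x_cont: "continuous_on ({xL..xR} \<times> V \<times> {0..T}) (\<lambda>(x, v, t). g_x x v t)"
    and g_bdd: "bounded ((\<lambda>(x, v, t). g x v t) ` ({xL..xR} \<times> V \<times> {0..T}))"
    and g_t_bdd: "bounded ((\<lambda>(x, v, t). g_t x v t) ` ({xL..xR} \<times> V \<times> {0..T}))"
    and g_x_bdd: "bounded ((\<lambda>(x, v, t). g_x x v t) ` ({xL..xR} \<times> V \<times> {0..T}))"
    and eq_rho: "\<And>x t. x \<in> {xL<..<xR} \<Longrightarrow> t \<in> {0<..T} \<Longrightarrow>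
        ((\<lambda>y. vavg nu (\<lambda>v. v * g y v t)) has_real_derivative
           (- sa x * rho x t - rho_t x t)) (at x)"
    and eq_g: "\<And>x v t. x \<in> {xL<..<xR} \<Longrightarrow> v \<in> V \<Longrightarrow> t \<in> {0<..T} \<Longrightarrow>
        g_t x v t + (1 / \<epsilon>) * v * g_x x v t - (1 / \<epsilon>) * vavg nu (\<lambda>w. w * g_x x w t)
          + (1 / \<epsilon>\<^sup>2) * v * rho_x x t
        = - (ss x / \<epsilon>\<^sup>2 + sa x) * g x v t"
    and init: "\<And>x. x \<in> {xL<..<xR} \<Longrightarrow> vavg nu (\<lambda>v. g x v 0) = 0"
begin

sublocale nu: prob_space nu by (rule nu_prob)

definition uniform_bound :: "real \<Rightarrow> bool" where
  "uniform_bound K \<longleftrightarrow>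
      (\<forall>x\<in>{xL..xR}. \<forall>v\<in>V. \<forall>t\<in>{0..T}. \<bar>g x v t\<bar> \<le> K \<and> \<bar>g_t x v t\<bar> \<le> K \<and> \<bar>g_x x v t\<bar> \<le> K)
    \<and> (\<forall>x\<in>{xL..xR}. \<forall>t\<in>{0..T}. \<bar>rho x t\<bar> \<le> K \<and> \<bar>rho_x x t\<bar> \<le> K)
    \<and> (\<forall>x\<in>{xL..xR}. \<bar>ss x\<bar> \<le> K \<and> \<bar>sa x\<bar> \<le> K)
    \<and> (\<forall>v\<in>V. \<bar>v\<bar> \<le> K)"

lemma ex_uniform_bound: "\<exists>K. uniform_bound K"
proof -
  let ?A = "{xL..xR} \<times> V \<times> {0..T}" and ?B = "{xL..xR} \<times> {0..T}"
  have bounded_image: "bounded (f ` S)" if "continuous_on S f" "compact S" for f :: "'b::topological_space \<Rightarrow> real" and S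
    using that by (intro compact_imp_bounded compact_continuous_image)
  have compact_B: "compact ?B" by (intro compact_Times compact_Icc)
  define U where "U = (\<lambda>(x, v, t). g x v t) ` ?A \<union> (\<lambda>(x, v, t). g_t x v t) ` ?A
      \<union> (\<lambda>(x, v, t). g_x x v t) ` ?A \<union> (\<lambda>(x, t). rho x t) ` ?B \<union> (\<lambda>(x, t). rho_x x t) ` ?B
      \<union> ss ` {xL..xR} \<union> sa ` {xL..xR} \<union> V"
  have "bounded U"
    using g_bdd g_t_bdd g_x_bdd V_bounded
      bounded_image[OF rho_cont compact_B] bounded_image[OF rho_x_cont compact_B]
      bounded_image[OF ss_cont compact_Icc] bounded_image[OF sa_cont compact_Icc]
    unfolding U_def bounded_Un by blast
  then obtain K where K: "\<And>y. y \<in> U \<Longrightarrow> \<bar>y\<bar> \<le> K"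
    unfolding bounded_iff real_norm_def by blast
  have images: "(\<lambda>(x, v, t). g x v t) ` ?A \<subseteq> U" "(\<lambda>(x, v, t). g_t x v t) ` ?A \<subseteq> U"
    "(\<lambda>(x, v, t). g_x x v t) ` ?A \<subseteq> U" "(\<lambda>(x, t). rho x t) ` ?B \<subseteq> U"
    "(\<lambda>(x, t). rho_x x t) ` ?B \<subseteq> U" "ss ` {xL..xR} \<subseteq> U" "sa ` {xL..xR} \<subseteq> U" "V \<subseteq> U"
    unfolding U_def by blast+
  have "uniform_bound K" unfolding uniform_bound_def
  proof (intro conjI ballI)
    fix x v t assume "x \<in> {xL..xR}" "v \<in> V" "t \<in> {0..T}"
    then have A: "(x, v, t) \<in> ?A" by simp
    show "\<bar>g x v t\<bar> \<le> K" using K subsetD[OF images(1) imageI[OF A]] by simp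
    show "\<bar>g_t x v t\<bar> \<le> K" using K subsetD[OF images(2) imageI[OF A]] by simp
    show "\<bar>g_x x v t\<bar> \<le> K" using K subsetD[OF images(3) imageI[OF A]] by simp
  next
    fix x t assume "x \<in> {xL..xR}" "t \<in> {0..T}"
    then have B: "(x, t) \<in> ?B" by simp
    show "\<bar>rho x t\<bar> \<le> K" using K subsetD[OF images(4) imageI[OF B]] by simp
    show "\<bar>rho_x x t\<bar> \<le> K" using K subsetD[OF images(5) imageI[OF B]] by simp
  qed (use images(6-8) in \<open>auto intro!: K\<close>)
  then show ?thesis ..
qed

definition bound :: real where "bound = (SOME K. uniform_bound K)"

lemma uniform_bound_bound: "uniform_bound bound"
  unfolding bound_def using ex_uniform_bound by (rule someI_ex)

lemma g_bound:
  assumes "x \<in> {xL..xR}" "v \<in> V" "t \<in> {0..T}"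
  shows "\<bar>g x v t\<bar> \<le> bound" "\<bar>g_t x v t\<bar> \<le> bound" "\<bar>g_x x v t\<bar> \<le> bound"
  using uniform_bound_bound assms unfolding uniform_bound_def by auto

lemma rho_bound:
  assumes "x \<in> {xL..xR}" "t \<in> {0..T}"
  shows "\<bar>rho x t\<bar> \<le> bound" "\<bar>rho_x x t\<bar> \<le> bound"
  using uniform_bound_bound assms unfolding uniform_bound_def by auto

lemma sigma_bound:
  assumes "x \<in> {xL..xR}"
  shows "\<bar>ss x\<bar> \<le> bound" "\<bar>sa x\<bar> \<le> bound"
  using uniform_bound_bound assms unfolding uniform_bound_def by auto

lemma velocity_bound: "v \<in> V \<Longrightarrow> \<bar>v\<bar> \<le> bound"
  using uniform_bound_bound unfolding uniform_bound_def by auto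

lemma continuous_on_g_compose:
  assumes "continuous_on S f1" "continuous_on S f2" "continuous_on S f3"
    "\<And>s. s \<in> S \<Longrightarrow> f1 s \<in> {xL..xR}" "\<And>s. s \<in> S \<Longrightarrow> f2 s \<in> V" "\<And>s. s \<in> S \<Longrightarrow> f3 s \<in> {0..T}"
  shows "continuous_on S (\<lambda>s. g (f1 s) (f2 s) (f3 s))"
    and "continuous_on S (\<lambda>s. g_t (f1 s) (f2 s) (f3 s))"
    and "continuous_on S (\<lambda>s. g_x (f1 s) (f2 s) (f3 s))"
proof -
  have c: "continuous_on S (\<lambda>s. (f1 s, f2 s, f3 s))" by (intro continuous_on_Pair assms)
  have i: "(\<lambda>s. (f1 s, f2 s, f3 s)) ` S \<subseteq> {xL..xR} \<times> V \<times> {0..T}" using assms by auto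
  show "continuous_on S (\<lambda>s. g (f1 s) (f2 s) (f3 s))"
    using continuous_on_compose2[OF g_cont c i] by simp
  show "continuous_on S (\<lambda>s. g_t (f1 s) (f2 s) (f3 s))"
    using continuous_on_compose2[OF g_t_cont c i] by simp
  show "continuous_on S (\<lambda>s. g_x (f1 s) (f2 s) (f3 s))"
    using continuous_on_compose2[OF g_x_cont c i] by simp
qed

lemma continuous_on_rho_compose:
  assumes "continuous_on S f1" "continuous_on S f2"
    "\<And>s. s \<in> S \<Longrightarrow> f1 s \<in> {xL..xR}" "\<And>s. s \<in> S \<Longrightarrow> f2 s \<in> {0..T}"
  shows "continuous_on S (\<lambda>s. rho (f1 s) (f2 s))"
    and "continuous_on S (\<lambda>s. rho_t (f1 s) (f2 s))"
    and "continuous_on S (\<lambda>s. rho_x (f1 s) (f2 s))"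
proof -
  have c: "continuous_on S (\<lambda>s. (f1 s, f2 s))" by (intro continuous_on_Pair assms)
  have i: "(\<lambda>s. (f1 s, f2 s)) ` S \<subseteq> {xL..xR} \<times> {0..T}" using assms by auto
  show "continuous_on S (\<lambda>s. rho (f1 s) (f2 s))"
    using continuous_on_compose2[OF rho_cont c i] by simp
  show "continuous_on S (\<lambda>s. rho_t (f1 s) (f2 s))"
    using continuous_on_compose2[OF rho_t_cont c i] by simp
  show "continuous_on S (\<lambda>s. rho_x (f1 s) (f2 s))"
    using continuous_on_compose2[OF rho_x_cont c i] by simp
qed

lemma continuous_on_sigma_compose:
  assumes "continuous_on S f" "\<And>s. s \<in> S \<Longrightarrow> f s \<in> {xL..xR}"
  shows "continuous_on S (\<lambda>s. ss (f s))" and "continuous_on S (\<lambda>s. sa (f s))"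
proof -
  have "f ` S \<subseteq> {xL..xR}" using assms(2) by auto
  then show "continuous_on S (\<lambda>s. ss (f s))" "continuous_on S (\<lambda>s. sa (f s))"
    using continuous_on_compose2[OF ss_cont assms(1)] continuous_on_compose2[OF sa_cont assms(1)] by auto
qed

lemmas continuous_on_solution =
  continuous_on_g_compose continuous_on_rho_compose continuous_on_sigma_compose

lemma integrable_velocity:
  fixes f :: "real \<Rightarrow> real"
  shows "continuous_on V f \<Longrightarrow> (\<And>v. v \<in> V \<Longrightarrow> \<bar>f v\<bar> \<le> B) \<Longrightarrow> integrable nu f"
  by (rule integrable_continuous_on_bounded[OF nu.finite_measure_axioms nu_space nu_sets])

lemma measurable_velocity: "continuous_on V f \<Longrightarrow> f \<in> borel_measurable nu"
  by (rule borel_measurable_continuous_on_restrict_sets[OF nu_sets])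

lemma integral_velocity_id: "(\<integral>v. v \<partial>nu) = 0"
  using nu_mean by (simp add: vavg_def)

lemma integrable_velocity_id: "integrable nu (\<lambda>v. v)"
  by (rule integrable_velocity[where B=bound]) (auto intro!: continuous_intros velocity_bound)

lemma abs_interval_integral_le:
  fixes F :: "real \<Rightarrow> real \<Rightarrow> real"
  assumes "continuous_on ({xL..xR} \<times> V) (\<lambda>(x, v). F x v)"
    and "\<And>x v. x \<in> {xL..xR} \<Longrightarrow> v \<in> V \<Longrightarrow> \<bar>F x v\<bar> \<le> B" and v: "v \<in> V"
  shows "\<bar>integral {xL..xR} (\<lambda>x. F x v)\<bar> \<le> B * (xR - xL)"
proof -
  have "continuous_on {xL..xR} (\<lambda>x. F x v)"
    by (rule continuous_on_compose2[OF assms(1), where f="\<lambda>x. (x, v)", simplified])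
       (use v in \<open>auto intro!: continuous_intros\<close>)
  then show ?thesis
    using integral_bound[of xL xR "\<lambda>x. F x v" B] dom assms(2) v by auto
qed

lemma integrable_velocity_interval_integral:
  fixes F :: "real \<Rightarrow> real \<Rightarrow> real"
  assumes "continuous_on ({xL..xR} \<times> V) (\<lambda>(x, v). F x v)"
    and "\<And>x v. x \<in> {xL..xR} \<Longrightarrow> v \<in> V \<Longrightarrow> \<bar>F x v\<bar> \<le> B"
  shows "integrable nu (\<lambda>v. integral {xL..xR} (\<lambda>x. F x v))"
  using assms
  by (intro integrable_velocity[where B="B * (xR - xL)"] continuous_on_interval_integral
      abs_interval_integral_le)

definition mean_vg :: "real \<Rightarrow> real \<Rightarrow> real" where
  "mean_vg t x = (\<integral>v. v * g x v t \<partial>nu)"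

definition mean_vg_x :: "real \<Rightarrow> real \<Rightarrow> real" where
  "mean_vg_x t x = (\<integral>v. v * g_x x v t \<partial>nu)"

lemma integrable_velocity_g:
  assumes "x \<in> {xL..xR}" "t \<in> {0..T}"
  shows "integrable nu (\<lambda>v. g x v t)" "integrable nu (\<lambda>v. v * g x v t)"
    "integrable nu (\<lambda>v. v * g_x x v t)" "integrable nu (\<lambda>v. v * (g x v t)\<^sup>2)"
proof -
  have cont: "continuous_on V (\<lambda>v. g x v t)" "continuous_on V (\<lambda>v. g_x x v t)"
    using assms by (auto intro!: continuous_intros continuous_on_solution)
  show "integrable nu (\<lambda>v. g x v t)"
    using assms by (intro integrable_velocity[OF cont(1), where B=bound] g_bound)
  show "integrable nu (\<lambda>v. v * g x v t)"
    using assms by (intro integrable_velocity[where B="bound * bound"] continuous_intros cont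
        abs_mult_le_mult velocity_bound g_bound)
  show "integrable nu (\<lambda>v. v * g_x x v t)"
    using assms by (intro integrable_velocity[where B="bound * bound"] continuous_intros cont
        abs_mult_le_mult velocity_bound g_bound)
  show "integrable nu (\<lambda>v. v * (g x v t)\<^sup>2)"
    unfolding power2_eq_square
    using assms by (intro integrable_velocity[where B="bound * (bound * bound)"] continuous_intros cont
        abs_mult_le_mult velocity_bound g_bound)
qed

lemma continuous_on_mean_vg:
  assumes "continuous_on S f" "\<And>s. s \<in> S \<Longrightarrow> f s \<in> {xL..xR}" and t: "t \<in> {0..T}"
  shows "continuous_on S (\<lambda>s. mean_vg t (f s))" "continuous_on S (\<lambda>s. mean_vg_x t (f s))"
proof -
  have "continuous_on {xL..xR} (mean_vg t)" "continuous_on {xL..xR} (mean_vg_x t)"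
    unfolding mean_vg_def mean_vg_x_def using t integrable_velocity_g[OF _ t]
    by (auto simp: nu_space intro!: nu.continuous_on_integral[where B="bound * bound"] continuous_intros
        continuous_on_solution abs_mult_le_mult[OF velocity_bound] g_bound)
  moreover have "f ` S \<subseteq> {xL..xR}" using assms(2) by auto
  ultimately show "continuous_on S (\<lambda>s. mean_vg t (f s))" "continuous_on S (\<lambda>s. mean_vg_x t (f s))"
    using continuous_on_compose2[OF _ assms(1)] by blast+
qed

lemma mean_vg_x_bound:
  assumes "x \<in> {xL..xR}" "t \<in> {0..T}"
  shows "\<bar>mean_vg_x t x\<bar> \<le> bound * bound"
proof -
  have "\<bar>mean_vg_x t x\<bar> \<le> (\<integral>v. \<bar>v * g_x x v t\<bar> \<partial>nu)"
    unfolding mean_vg_x_def by (rule integral_abs_bound)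
  also have "\<dots> \<le> bound * bound"
    using assms integrable_velocity_g(3)[OF assms]
    by (intro nu.integral_le_const AE_I2) (auto simp: nu_space intro!: abs_mult_le_mult[OF velocity_bound] g_bound)
  finally show ?thesis .
qed

lemma has_real_derivative_mean_g:
  assumes "x \<in> {xL..xR}" "s \<in> {0..T}"
  shows "((\<lambda>s. \<integral>v. g x v s \<partial>nu) has_real_derivative (\<integral>v. g_t x v s \<partial>nu)) (at s within {0..T})"
  using assms g_dt g_bound integrable_velocity_g(1)
  by (intro nu.has_real_derivative_integral[where B=bound] measurable_velocity)
     (auto simp: nu_space intro!: continuous_intros continuous_on_solution)

text \<open>Averaging the micro equation over \<open>v\<close>: the transport terms cancel and
  \<open>\<langle>v\<rangle> = 0\<close> removes the source term.\<close>
lemma mean_g_t: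
  assumes x: "x \<in> {xL<..<xR}" and s: "s \<in> {0<..T}"
  shows "(\<integral>v. g_t x v s \<partial>nu) = - (ss x / \<epsilon>\<^sup>2 + sa x) * (\<integral>v. g x v s \<partial>nu)"
proof -
  have xs: "x \<in> {xL..xR}" "s \<in> {0..T}" using x s by auto
  have "(\<integral>v. g_t x v s \<partial>nu) = (\<integral>v. (1/\<epsilon>) * mean_vg_x s x - (1/\<epsilon>) * (v * g_x x v s)
      - ((1/\<epsilon>\<^sup>2) * rho_x x s) * v - (ss x / \<epsilon>\<^sup>2 + sa x) * g x v s \<partial>nu)"
    using eq_g[OF x _ s]
    by (intro Bochner_Integration.integral_cong) (auto simp: nu_space vavg_def mean_vg_x_def algebra_simps)
  also have "\<dots> = (\<integral>v. (1/\<epsilon>) * mean_vg_x s x \<partial>nu) - (1/\<epsilon>) * (\<integral>v. v * g_x x v s \<partial>nu)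
      - ((1/\<epsilon>\<^sup>2) * rho_x x s) * (\<integral>v. v \<partial>nu) - (ss x / \<epsilon>\<^sup>2 + sa x) * (\<integral>v. g x v s \<partial>nu)"
    by (intro has_bochner_integral_integral_eq has_bochner_integral_diff has_bochner_integral_mult_right
        has_bochner_integral_integrable integrable_velocity_g xs integrable_velocity_id nu.integrable_const)
  finally show ?thesis by (simp add: nu.prob_space integral_velocity_id mean_vg_x_def algebra_simps)
qed

lemma mean_g_eq_0:
  assumes x: "x \<in> {xL<..<xR}" and t: "t \<in> {0..T}"
  shows "(\<integral>v. g x v t \<partial>nu) = 0"
proof (rule linear_ode_zero[OF _ _ _ t, where k="ss x / \<epsilon>\<^sup>2 + sa x"])
  have G': "((\<lambda>s. \<integral>v. g x v s \<partial>nu) has_real_derivative (\<integral>v. g_t x v s \<partial>nu)) (at s within {0..T})"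
    if "s \<in> {0..T}" for s
    using has_real_derivative_mean_g x that by auto
  then show "continuous_on {0..T} (\<lambda>s. \<integral>v. g x v s \<partial>nu)"
    unfolding continuous_on_eq_continuous_within using DERIV_continuous by blast
  fix s assume "s \<in> {0<..<T}"
  then show "((\<lambda>s. \<integral>v. g x v s \<partial>nu) has_real_derivative
      - (ss x / \<epsilon>\<^sup>2 + sa x) * (\<integral>v. g x v s \<partial>nu)) (at s)"
    using G'[of s] mean_g_t[OF x, of s] at_within_interior[of s "{0..T}"] by auto
qed (use init[OF x] in \<open>simp add: vavg_def\<close>)

section \<open>Energy balance\<close>

definition energy :: "real \<Rightarrow> real" where
  "energy t = L2sq xL xR (\<lambda>x. rho x t) + \<epsilon>\<^sup>2 * tnormsq nu xL xR (\<lambda>x v. g x v t)"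

definition energy_rate :: "real \<Rightarrow> real" where
  "energy_rate t = integral {xL..xR} (\<lambda>x. 2 * rho x t * rho_t x t)
     + \<epsilon>\<^sup>2 * (\<integral>v. integral {xL..xR} (\<lambda>x. 2 * g x v t * g_t x v t) \<partial>nu)"

lemma has_real_derivative_energy:
  assumes t: "t \<in> {0..T}"
  shows "(energy has_real_derivative energy_rate t) (at t within {0..T})"
proof -
  have rho': "((\<lambda>s. L2sq xL xR (\<lambda>x. rho x s)) has_real_derivative
      integral {xL..xR} (\<lambda>x. 2 * rho x t * rho_t x t)) (at t within {0..T})"
    by (rule has_real_derivative_L2sq[OF _ t rho_dt rho_cont rho_t_cont]) simp_all
  have g': "((\<lambda>s. L2sq xL xR (\<lambda>x. g x v s)) has_real_derivative
      integral {xL..xR} (\<lambda>x. 2 * g x v s * g_t x v s)) (at s within {0..T})"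
    if "s \<in> {0..T}" "v \<in> V" for s v
    by (rule has_real_derivative_L2sq[OF _ that(1)])
       (use that g_dt in \<open>auto simp: split_beta' intro!: continuous_intros continuous_on_solution\<close>)
  have g_t_bound: "\<bar>2 * g x v s * g_t x v s\<bar> \<le> 2 * bound * bound"
    if "x \<in> {xL..xR}" "v \<in> V" "s \<in> {0..T}" for x v s
    using abs_mult_le_mult[OF abs_mult_le_mult[OF _ g_bound(1)] g_bound(2)] that
    by (simp add: mult.assoc)
  have "((\<lambda>s. \<integral>v. L2sq xL xR (\<lambda>x. g x v s) \<partial>nu) has_real_derivative
      (\<integral>v. integral {xL..xR} (\<lambda>x. 2 * g x v t * g_t x v t) \<partial>nu)) (at t within {0..T})"
  proof (rule nu.has_real_derivative_integral[OF _ t, where B="2 * bound * bound * (xR - xL)"])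
    show "\<bar>integral {xL..xR} (\<lambda>x. 2 * g x v s * g_t x v s)\<bar> \<le> 2 * bound * bound * (xR - xL)"
      if "s \<in> {0..T}" "v \<in> space nu" for s v
      using that g_t_bound
      by (intro abs_interval_integral_le)
         (auto simp: nu_space split_beta' intro!: continuous_intros continuous_on_solution)
    show "integrable nu (\<lambda>v. L2sq xL xR (\<lambda>x. g x v s))" if "s \<in> {0..T}" for s
      unfolding L2sq_def power2_eq_square using that
      by (intro integrable_velocity_interval_integral[where B="bound * bound"] abs_mult_le_mult g_bound)
         (auto simp: split_beta' intro!: continuous_intros continuous_on_solution)
    show "(\<lambda>v. integral {xL..xR} (\<lambda>x. 2 * g x v t * g_t x v t)) \<in> borel_measurable nu"
      using t by (intro measurable_velocity continuous_on_interval_integral)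
         (auto simp: split_beta' intro!: continuous_intros continuous_on_solution)
  qed (use g' in \<open>auto simp: nu_space\<close>)
  then show ?thesis
    unfolding energy_def energy_rate_def tnormsq_def vavg_def using rho'
    by (auto intro!: derivative_eq_intros)
qed

lemma rho_energy_rate:
  assumes t: "t \<in> {0<..T}"
  shows "integral {xL..xR} (\<lambda>x. 2 * rho x t * rho_t x t)
    = - 2 * integral {xL..xR} (\<lambda>x. sa x * (rho x t)\<^sup>2)
      - 2 * (rho xR t * mean_vg t xR - rho xL t * mean_vg t xL)
      + 2 * integral {xL..xR} (\<lambda>x. rho_x x t * mean_vg t x)"
proof -
  have tJ: "t \<in> {0..T}" using t by auto
  define flux' where "flux' x = - sa x * rho x t - rho_t x t" for x
  have parts: "((\<lambda>x. rho_x x t * mean_vg t x + rho x t * flux' x) has_integral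
      (rho xR t * mean_vg t xR - rho xL t * mean_vg t xL)) {xL..xR}"
  proof (rule fundamental_theorem_of_calculus_interior[OF less_imp_le[OF dom]])
    show "continuous_on {xL..xR} (\<lambda>x. rho x t * mean_vg t x)"
      using tJ by (auto intro!: continuous_intros continuous_on_solution continuous_on_mean_vg)
    fix x assume x: "x \<in> {xL<..<xR}"
    have "((\<lambda>y. rho y t) has_real_derivative rho_x x t) (at x)"
      using rho_dx[of x t] x tJ at_within_interior[of x "{xL..xR}"] by auto
    moreover have "(mean_vg t has_real_derivative flux' x) (at x)"
      using eq_rho[OF x t] unfolding vavg_def mean_vg_def[abs_def] flux'_def .
    ultimately have "((\<lambda>y. rho y t * mean_vg t y) has_real_derivative
        rho_x x t * mean_vg t x + flux' x * rho x t) (at x)"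
      by (rule DERIV_mult)
    then show "((\<lambda>y. rho y t * mean_vg t y) has_vector_derivative
        rho_x x t * mean_vg t x + rho x t * flux' x) (at x)"
      by (simp add: has_real_derivative_iff_has_vector_derivative[symmetric] mult.commute)
  qed
  have integrable: "((\<lambda>x. sa x * (rho x t)\<^sup>2) has_integral integral {xL..xR} (\<lambda>x. sa x * (rho x t)\<^sup>2)) {xL..xR}"
    "((\<lambda>x. rho_x x t * mean_vg t x) has_integral integral {xL..xR} (\<lambda>x. rho_x x t * mean_vg t x)) {xL..xR}"
    using tJ by (auto intro!: integrable_integral integrable_continuous_interval continuous_intros
        continuous_on_solution continuous_on_mean_vg)
  have "((\<lambda>x. - 2 * (sa x * (rho x t)\<^sup>2) - 2 * (rho_x x t * mean_vg t x + rho x t * flux' x)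
      + 2 * (rho_x x t * mean_vg t x)) has_integral
      - 2 * integral {xL..xR} (\<lambda>x. sa x * (rho x t)\<^sup>2)
      - 2 * (rho xR t * mean_vg t xR - rho xL t * mean_vg t xL)
      + 2 * integral {xL..xR} (\<lambda>x. rho_x x t * mean_vg t x)) {xL..xR}"
    by (intro has_integral_add has_integral_diff has_integral_mult_right parts integrable)
  moreover have "- 2 * (sa x * (rho x t)\<^sup>2) - 2 * (rho_x x t * mean_vg t x + rho x t * flux' x)
      + 2 * (rho_x x t * mean_vg t x) = 2 * rho x t * rho_t x t" for x
    by (simp add: flux'_def power2_eq_square algebra_simps)
  ultimately show ?thesis by (simp add: integral_unique)
qed

lemma g_energy_rate:
  assumes t: "t \<in> {0<..T}" and v: "v \<in> V"
  shows "\<epsilon>\<^sup>2 * integral {xL..xR} (\<lambda>x. 2 * g x v t * g_t x v t)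
    = - \<epsilon> * (v * (g xR v t)\<^sup>2 - v * (g xL v t)\<^sup>2)
      + 2 * \<epsilon> * integral {xL..xR} (\<lambda>x. g x v t * mean_vg_x t x)
      - 2 * integral {xL..xR} (\<lambda>x. v * g x v t * rho_x x t)
      - 2 * integral {xL..xR} (\<lambda>x. (ss x + \<epsilon>\<^sup>2 * sa x) * (g x v t)\<^sup>2)"
proof -
  have tJ: "t \<in> {0..T}" using t by auto
  define R where "R x = - \<epsilon> * v * (2 * g x v t * g_x x v t) + 2 * \<epsilon> * (g x v t * mean_vg_x t x)
     - 2 * (v * g x v t * rho_x x t) - 2 * ((ss x + \<epsilon>\<^sup>2 * sa x) * (g x v t)\<^sup>2)" for x
  have micro: "\<epsilon>\<^sup>2 * (2 * g x v t * g_t x v t) = R x" if x: "x \<in> {xL<..<xR}" for x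
  proof -
    have g_t: "g_t x v t = - (ss x / \<epsilon>\<^sup>2 + sa x) * g x v t - (1 / \<epsilon>) * v * g_x x v t
        + (1 / \<epsilon>) * mean_vg_x t x - (1 / \<epsilon>\<^sup>2) * v * rho_x x t"
      using eq_g[OF x v t] unfolding vavg_def mean_vg_x_def by linarith
    show ?thesis
      unfolding R_def g_t using eps_pos by (simp add: field_simps power2_eq_square)
  qed
  have transport: "((\<lambda>x. 2 * g x v t * g_x x v t) has_integral ((g xR v t)\<^sup>2 - (g xL v t)\<^sup>2)) {xL..xR}"
  proof (rule fundamental_theorem_of_calculus[OF less_imp_le[OF dom]])
    fix x assume x: "x \<in> {xL..xR}"
    have "((\<lambda>y. (g y v t)\<^sup>2) has_real_derivative 2 * g x v t * g_x x v t) (at x within {xL..xR})"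
      using g_dx[OF x v tJ] by (auto intro!: derivative_eq_intros)
    then show "((\<lambda>y. (g y v t)\<^sup>2) has_vector_derivative 2 * g x v t * g_x x v t) (at x within {xL..xR})"
      by (simp add: has_real_derivative_iff_has_vector_derivative)
  qed
  have "((\<lambda>x. F x) has_integral integral {xL..xR} F) {xL..xR}"
    if "continuous_on {xL..xR} F" for F :: "real \<Rightarrow> real"
    using that by (intro integrable_integral integrable_continuous_interval)
  note integrable = this[of "\<lambda>x. g x v t * mean_vg_x t x"] this[of "\<lambda>x. v * g x v t * rho_x x t"]
    this[of "\<lambda>x. (ss x + \<epsilon>\<^sup>2 * sa x) * (g x v t)\<^sup>2"]
  have "\<epsilon>\<^sup>2 * integral {xL..xR} (\<lambda>x. 2 * g x v t * g_t x v t)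
      = integral {xL..xR} (\<lambda>x. \<epsilon>\<^sup>2 * (2 * g x v t * g_t x v t))"
    by simp
  also have "\<dots> = integral {xL..xR} R"
    by (rule integral_spike[where S="{xL, xR}"]) (use micro in auto)
  also have "\<dots> = - \<epsilon> * v * ((g xR v t)\<^sup>2 - (g xL v t)\<^sup>2)
      + 2 * \<epsilon> * integral {xL..xR} (\<lambda>x. g x v t * mean_vg_x t x)
      - 2 * integral {xL..xR} (\<lambda>x. v * g x v t * rho_x x t)
      - 2 * integral {xL..xR} (\<lambda>x. (ss x + \<epsilon>\<^sup>2 * sa x) * (g x v t)\<^sup>2)"
    unfolding R_def using tJ v
    by (intro integral_unique has_integral_diff has_integral_add has_integral_mult_right transport integrable)
       (auto intro!: continuous_intros continuous_on_solution continuous_on_mean_vg)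
  finally show ?thesis by (simp add: algebra_simps)
qed

lemma cross_section_bound:
  assumes "x \<in> {xL..xR}"
  shows "\<bar>ss x + \<epsilon>\<^sup>2 * sa x\<bar> \<le> bound + \<epsilon>\<^sup>2 * bound"
  using sigma_bound[OF assms] abs_triangle_ineq[of "ss x" "\<epsilon>\<^sup>2 * sa x"]
    mult_left_mono[of "\<bar>sa x\<bar>" bound "\<epsilon>\<^sup>2"]
  by (simp add: abs_mult)

lemma g_squared_bound:
  assumes "x \<in> {xL..xR}" "v \<in> V" "t \<in> {0..T}"
  shows "\<bar>(g x v t)\<^sup>2\<bar> \<le> bound * bound"
  unfolding power2_eq_square using assms by (intro abs_mult_le_mult g_bound)

lemma velocity_integral_g_mean_vg_x:
  assumes t: "t \<in> {0..T}"
  shows "(\<integral>v. integral {xL..xR} (\<lambda>x. g x v t * mean_vg_x t x) \<partial>nu) = 0"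
proof -
  have "(\<integral>v. integral {xL..xR} (\<lambda>x. g x v t * mean_vg_x t x) \<partial>nu)
      = integral {xL..xR} (\<lambda>x. \<integral>v. g x v t * mean_vg_x t x \<partial>nu)"
    using t
    by (intro integral_interval_integral_swap[OF nu.finite_measure_axioms nu_space nu_sets
          less_imp_le[OF dom], where B="bound * (bound * bound)"] abs_mult_le_mult g_bound mean_vg_x_bound)
       (auto simp: split_beta' intro!: continuous_intros continuous_on_solution continuous_on_mean_vg)
  also have "\<dots> = integral {xL..xR} (\<lambda>x. 0)"
    using mean_g_eq_0[OF _ t] by (intro integral_spike[where S="{xL, xR}"]) auto
  finally show ?thesis by simp
qed

lemma velocity_integral_vg_rho_x:
  assumes t: "t \<in> {0..T}"
  shows "(\<integral>v. integral {xL..xR} (\<lambda>x. v * g x v t * rho_x x t) \<partial>nu)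
    = integral {xL..xR} (\<lambda>x. rho_x x t * mean_vg t x)"
proof -
  have "(\<integral>v. integral {xL..xR} (\<lambda>x. v * g x v t * rho_x x t) \<partial>nu)
      = integral {xL..xR} (\<lambda>x. \<integral>v. v * g x v t * rho_x x t \<partial>nu)"
    using t
    by (intro integral_interval_integral_swap[OF nu.finite_measure_axioms nu_space nu_sets
          less_imp_le[OF dom], where B="bound * bound * bound"] abs_mult_le_mult velocity_bound g_bound
          rho_bound)
       (auto simp: split_beta' intro!: continuous_intros continuous_on_solution)
  then show ?thesis by (simp add: mean_vg_def mult.commute)
qed

lemma g_energy_rate_averaged:
  assumes t: "t \<in> {0<..T}"
  shows "\<epsilon>\<^sup>2 * (\<integral>v. integral {xL..xR} (\<lambda>x. 2 * g x v t * g_t x v t) \<partial>nu)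
    = - \<epsilon> * ((\<integral>v. v * (g xR v t)\<^sup>2 \<partial>nu) - (\<integral>v. v * (g xL v t)\<^sup>2 \<partial>nu))
      - 2 * integral {xL..xR} (\<lambda>x. rho_x x t * mean_vg t x)
      - 2 * (\<integral>v. integral {xL..xR} (\<lambda>x. (ss x + \<epsilon>\<^sup>2 * sa x) * (g x v t)\<^sup>2) \<partial>nu)"
proof -
  have tJ: "t \<in> {0..T}" and ends: "xL \<in> {xL..xR}" "xR \<in> {xL..xR}" using t dom by auto
  have integrable: "integrable nu (\<lambda>v. integral {xL..xR} (\<lambda>x. g x v t * mean_vg_x t x))"
    "integrable nu (\<lambda>v. integral {xL..xR} (\<lambda>x. v * g x v t * rho_x x t))"
    "integrable nu (\<lambda>v. integral {xL..xR} (\<lambda>x. (ss x + \<epsilon>\<^sup>2 * sa x) * (g x v t)\<^sup>2))"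
    using tJ
    by (intro integrable_velocity_interval_integral[where B="bound * (bound * bound)"]
          integrable_velocity_interval_integral[where B="bound * bound * bound"]
          integrable_velocity_interval_integral[where B="(bound + \<epsilon>\<^sup>2 * bound) * (bound * bound)"]
          abs_mult_le_mult g_bound velocity_bound rho_bound mean_vg_x_bound cross_section_bound g_squared_bound;
        auto simp: split_beta' intro!: continuous_intros continuous_on_solution continuous_on_mean_vg)+
  have "\<epsilon>\<^sup>2 * (\<integral>v. integral {xL..xR} (\<lambda>x. 2 * g x v t * g_t x v t) \<partial>nu)
      = (\<integral>v. \<epsilon>\<^sup>2 * integral {xL..xR} (\<lambda>x. 2 * g x v t * g_t x v t) \<partial>nu)"
    by simp
  also have "\<dots> = (\<integral>v. - \<epsilon> * (v * (g xR v t)\<^sup>2 - v * (g xL v t)\<^sup>2)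
          + 2 * \<epsilon> * integral {xL..xR} (\<lambda>x. g x v t * mean_vg_x t x)
          - 2 * integral {xL..xR} (\<lambda>x. v * g x v t * rho_x x t)
          - 2 * integral {xL..xR} (\<lambda>x. (ss x + \<epsilon>\<^sup>2 * sa x) * (g x v t)\<^sup>2) \<partial>nu)"
    using g_energy_rate[OF t] by (intro Bochner_Integration.integral_cong) (auto simp: nu_space)
  also have "\<dots> = - \<epsilon> * ((\<integral>v. v * (g xR v t)\<^sup>2 \<partial>nu) - (\<integral>v. v * (g xL v t)\<^sup>2 \<partial>nu))
      + 2 * \<epsilon> * (\<integral>v. integral {xL..xR} (\<lambda>x. g x v t * mean_vg_x t x) \<partial>nu)
      - 2 * (\<integral>v. integral {xL..xR} (\<lambda>x. v * g x v t * rho_x x t) \<partial>nu)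
      - 2 * (\<integral>v. integral {xL..xR} (\<lambda>x. (ss x + \<epsilon>\<^sup>2 * sa x) * (g x v t)\<^sup>2) \<partial>nu)"
    by (intro has_bochner_integral_integral_eq has_bochner_integral_diff has_bochner_integral_add
        has_bochner_integral_mult_right has_bochner_integral_integrable integrable
        integrable_velocity_g(4) ends tJ)
  finally show ?thesis
    unfolding velocity_integral_g_mean_vg_x[OF tJ] velocity_integral_vg_rho_x[OF tJ] by simp
qed

definition dissipation :: "real \<Rightarrow> real" where
  "dissipation t = integral {xL..xR} (\<lambda>x. sa x * (rho x t)\<^sup>2)
     + vavg nu (\<lambda>v. integral {xL..xR} (\<lambda>x. (ss x + \<epsilon>\<^sup>2 * sa x) * (g x v t)\<^sup>2))"

definition boundary_flux :: "real \<Rightarrow> real" where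
  "boundary_flux t = (vavg nu (\<lambda>v. v * (rho xL t + \<epsilon> * g xL v t)\<^sup>2)
     - vavg nu (\<lambda>v. v * (rho xR t + \<epsilon> * g xR v t)\<^sup>2)) / \<epsilon>"

lemma boundary_term_eq:
  assumes y: "y \<in> {xL..xR}" and t: "t \<in> {0..T}"
  shows "2 * rho y t * mean_vg t y + \<epsilon> * (\<integral>v. v * (g y v t)\<^sup>2 \<partial>nu)
    = vavg nu (\<lambda>v. v * (rho y t + \<epsilon> * g y v t)\<^sup>2) / \<epsilon>"
proof -
  have "vavg nu (\<lambda>v. v * (rho y t + \<epsilon> * g y v t)\<^sup>2)
      = (\<integral>v. (rho y t)\<^sup>2 * v + (2 * \<epsilon> * rho y t) * (v * g y v t) + \<epsilon>\<^sup>2 * (v * (g y v t)\<^sup>2) \<partial>nu)"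
    unfolding vavg_def by (rule Bochner_Integration.integral_cong) (simp_all add: power2_eq_square algebra_simps)
  also have "\<dots> = (rho y t)\<^sup>2 * (\<integral>v. v \<partial>nu) + (2 * \<epsilon> * rho y t) * mean_vg t y
      + \<epsilon>\<^sup>2 * (\<integral>v. v * (g y v t)\<^sup>2 \<partial>nu)"
    unfolding mean_vg_def
    by (intro has_bochner_integral_integral_eq has_bochner_integral_add has_bochner_integral_mult_right
        has_bochner_integral_integrable integrable_velocity_id integrable_velocity_g y t)
  finally show ?thesis using eps_pos by (simp add: integral_velocity_id field_simps power2_eq_square)
qed

lemma energy_rate_eq:
  assumes t: "t \<in> {0<..T}"
  shows "energy_rate t = - 2 * dissipation t + boundary_flux t"
proof -
  have "t \<in> {0..T}" "xL \<in> {xL..xR}" "xR \<in> {xL..xR}" using t dom by auto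
  note ends = boundary_term_eq[OF this(2,1)] boundary_term_eq[OF this(3,1)]
  show ?thesis
    unfolding energy_rate_def rho_energy_rate[OF t] g_energy_rate_averaged[OF t] dissipation_def
      boundary_flux_def diff_divide_distrib ends[symmetric]
    by (simp add: vavg_def algebra_simps)
qed

lemma continuous_on_dissipation: "continuous_on {0..T} dissipation"
proof -
  have "continuous_on {0..T} (\<lambda>t. integral {xL..xR} (\<lambda>x. sa x * (rho x t)\<^sup>2))"
    by (rule continuous_on_interval_integral)
       (auto simp: split_beta' intro!: continuous_intros continuous_on_solution)
  moreover have "continuous_on {0..T}
      (\<lambda>t. \<integral>v. integral {xL..xR} (\<lambda>x. (ss x + \<epsilon>\<^sup>2 * sa x) * (g x v t)\<^sup>2) \<partial>nu)"
  proof (rule nu.continuous_on_integral[where B="(bound + \<epsilon>\<^sup>2 * bound) * (bound * bound) * (xR - xL)"])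
    show "continuous_on {0..T} (\<lambda>t. integral {xL..xR} (\<lambda>x. (ss x + \<epsilon>\<^sup>2 * sa x) * (g x v t)\<^sup>2))"
      if "v \<in> space nu" for v
      using that
      by (intro continuous_on_interval_integral)
         (auto simp: nu_space split_beta' intro!: continuous_intros continuous_on_solution)
    show "\<bar>integral {xL..xR} (\<lambda>x. (ss x + \<epsilon>\<^sup>2 * sa x) * (g x v t)\<^sup>2)\<bar>
        \<le> (bound + \<epsilon>\<^sup>2 * bound) * (bound * bound) * (xR - xL)"
      if "t \<in> {0..T}" "v \<in> space nu" for t v
      using that
      by (intro abs_interval_integral_le abs_mult_le_mult cross_section_bound g_squared_bound)
         (auto simp: nu_space split_beta' intro!: continuous_intros continuous_on_solution)
    show "(\<lambda>v. integral {xL..xR} (\<lambda>x. (ss x + \<epsilon>\<^sup>2 * sa x) * (g x v t)\<^sup>2)) \<in> borel_measurable nu"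
      if "t \<in> {0..T}" for t
      using that
      by (intro measurable_velocity continuous_on_interval_integral)
         (auto simp: split_beta' intro!: continuous_intros continuous_on_solution)
  qed
  ultimately show ?thesis
    unfolding dissipation_def[abs_def] vavg_def by (intro continuous_intros)
qed

lemma energy_balance:
  "(boundary_flux has_integral (energy T - energy 0 + 2 * integral {0..T} dissipation)) {0<..T}"
proof -
  have "(energy_rate has_integral (energy T - energy 0)) {0..T}"
    using T_pos has_real_derivative_energy
    by (intro fundamental_theorem_of_calculus)
       (auto simp: has_real_derivative_iff_has_vector_derivative[symmetric])
  moreover have "(dissipation has_integral integral {0..T} dissipation) {0..T}"
    by (intro integrable_integral integrable_continuous_interval continuous_on_dissipation)
  ultimately have "((\<lambda>t. energy_rate t + 2 * dissipation t) has_integral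
      (energy T - energy 0 + 2 * integral {0..T} dissipation)) {0..T}"
    by (intro has_integral_add has_integral_mult_right)
  then have "((\<lambda>t. energy_rate t + 2 * dissipation t) has_integral
      (energy T - energy 0 + 2 * integral {0..T} dissipation)) {0<..T}"
    by (rule has_integral_spike_set_eq[THEN iffD1, rotated -1])
       (auto intro: negligible_subset[OF negligible_sing[of 0]])
  then show ?thesis
    by (rule has_integral_eq[rotated]) (simp add: energy_rate_eq)
qed

lemma energy_identity_periodic:
  assumes "\<forall>t\<in>{0<..T}. rho xL t = rho xR t \<and> (\<forall>v\<in>V. g xL v t = g xR v t)"
  shows "energy T = - 2 * integral {0..T} dissipation + energy 0"
proof -
  have "boundary_flux t = 0" if "t \<in> {0<..T}" for t
    using assms that unfolding boundary_flux_def vavg_def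
    by (auto simp: nu_space intro!: Bochner_Integration.integral_cong)
  then have "((\<lambda>_. 0) has_integral (energy T - energy 0 + 2 * integral {0..T} dissipation)) {0<..T}"
    by (intro has_integral_eq[OF _ energy_balance]) simp
  from has_integral_unique[OF has_integral_0 this] show ?thesis by simp
qed

lemma energy_inequality_inflow:
  assumes inflow: "\<forall>t\<in>{0<..T}. (\<forall>v\<in>V. v > 0 \<longrightarrow> rho xL t + \<epsilon> * g xL v t = 0)
                       \<and> (\<forall>v\<in>V. v < 0 \<longrightarrow> rho xR t + \<epsilon> * g xR v t = 0)"
  shows "energy T \<le> - 2 * integral {0..T} dissipation + energy 0"
proof -
  have "boundary_flux t \<le> 0" if t: "t \<in> {0<..T}" for t
  proof -
    have "0 \<le> (\<integral>v. - (v * (rho xL t + \<epsilon> * g xL v t)\<^sup>2) \<partial>nu)"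
    proof (rule Bochner_Integration.integral_nonneg)
      fix v assume "v \<in> space nu"
      then show "0 \<le> - (v * (rho xL t + \<epsilon> * g xL v t)\<^sup>2)"
        using inflow t by (cases "v > 0") (auto simp: nu_space mult_nonpos_nonneg)
    qed
    moreover have "0 \<le> (\<integral>v. v * (rho xR t + \<epsilon> * g xR v t)\<^sup>2 \<partial>nu)"
    proof (rule Bochner_Integration.integral_nonneg)
      fix v assume "v \<in> space nu"
      then show "0 \<le> v * (rho xR t + \<epsilon> * g xR v t)\<^sup>2"
        using inflow t by (cases "v < 0") (auto simp: nu_space)
    qed
    ultimately show ?thesis
      unfolding boundary_flux_def vavg_def using eps_pos by (simp add: divide_nonpos_pos)
  qed
  then have "energy T - energy 0 + 2 * integral {0..T} dissipation \<le> 0"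
    by (intro has_integral_le[OF energy_balance has_integral_0]) auto
  then show ?thesis by simp
qed

end

theorem theorem2p1:
  fixes xL xR T \<epsilon> :: real
    and \<Omega>v :: "real set" and nu :: "real measure"
    and ss sa :: "real \<Rightarrow> real"
    and rho rho_t rho_x :: "real \<Rightarrow> real \<Rightarrow> real"
    and g g_t g_x :: "real \<Rightarrow> real \<Rightarrow> real \<Rightarrow> real"
  assumes dom: "xL < xR" and T_pos: "T > 0" and eps_pos: "\<epsilon> > 0"
    (* velocity space and its measure *)
    and V_bounded: "bounded \<Omega>v"
    and nu_space: "space nu = \<Omega>v"
    and nu_sets: "sets nu = sets (restrict_space borel \<Omega>v)"
    and nu_prob: "prob_space nu"
    and nu_mean: "vavg nu (\<lambda>v. v) = 0"
    (* cross sections *)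
    and ss_pos: "\<And>x. x \<in> {xL..xR} \<Longrightarrow> ss x > 0"
    and sa_nonneg: "\<And>x. x \<in> {xL..xR} \<Longrightarrow> sa x \<ge> 0"
    and ss_cont: "continuous_on {xL..xR} ss"
    and sa_cont: "continuous_on {xL..xR} sa"
    (* smoothness of rho *)
    and rho_dt: "\<And>x t. x \<in> {xL..xR} \<Longrightarrow> t \<in> {0..T} \<Longrightarrow>
        ((\<lambda>s. rho x s) has_real_derivative rho_t x t) (at t within {0..T})"
    and rho_dx: "\<And>x t. x \<in> {xL..xR} \<Longrightarrow> t \<in> {0..T} \<Longrightarrow>
        ((\<lambda>y. rho y t) has_real_derivative rho_x x t) (at x within {xL..xR})"
    and rho_cont: "continuous_on ({xL..xR} \<times> {0..T}) (\<lambda>(x, t). rho x t)"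
    and rho_t_cont: "continuous_on ({xL..xR} \<times> {0..T}) (\<lambda>(x, t). rho_t x t)"
    and rho_x_cont: "continuous_on ({xL..xR} \<times> {0..T}) (\<lambda>(x, t). rho_x x t)"
    (* smoothness of g *)
    and g_dt: "\<And>x v t. x \<in> {xL..xR} \<Longrightarrow> v \<in> \<Omega>v \<Longrightarrow> t \<in> {0..T} \<Longrightarrow>
        ((\<lambda>s. g x v s) has_real_derivative g_t x v t) (at t within {0..T})"
    and g_dx: "\<And>x v t. x \<in> {xL..xR} \<Longrightarrow> v \<in> \<Omega>v \<Longrightarrow> t \<in> {0..T} \<Longrightarrow>
        ((\<lambda>y. g y v t) has_real_derivative g_x x v t) (at x within {xL..xR})"
    and g_cont: "continuous_on ({xL..xR} \<times> \<Omega>v \<times> {0..T}) (\<lambda>(x, v, t). g x v t)"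
    and g_t_cont: "continuous_on ({xL..xR} \<times> \<Omega>v \<times> {0..T}) (\<lambda>(x, v, t). g_t x v t)"
    and g_x_cont: "continuous_on ({xL..xR} \<times> \<Omega>v \<times> {0..T}) (\<lambda>(x, v, t). g_x x v t)"
    and g_bdd: "bounded ((\<lambda>(x, v, t). g x v t) ` ({xL..xR} \<times> \<Omega>v \<times> {0..T}))"
    and g_t_bdd: "bounded ((\<lambda>(x, v, t). g_t x v t) ` ({xL..xR} \<times> \<Omega>v \<times> {0..T}))"
    and g_x_bdd: "bounded ((\<lambda>(x, v, t). g_x x v t) ` ({xL..xR} \<times> \<Omega>v \<times> {0..T}))"
    (* the micro-macro system on (xL,xR) x (0,T] *)
    and eq_rho: "\<And>x t. x \<in> {xL<..<xR} \<Longrightarrow> t \<in> {0<..T} \<Longrightarrow>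
        ((\<lambda>y. vavg nu (\<lambda>v. v * g y v t)) has_real_derivative
           (- sa x * rho x t - rho_t x t)) (at x)"
    and eq_g: "\<And>x v t. x \<in> {xL<..<xR} \<Longrightarrow> v \<in> \<Omega>v \<Longrightarrow> t \<in> {0<..T} \<Longrightarrow>
        g_t x v t + (1 / \<epsilon>) * v * g_x x v t - (1 / \<epsilon>) * vavg nu (\<lambda>w. w * g_x x w t)
          + (1 / \<epsilon>\<^sup>2) * v * rho_x x t
        = - (ss x / \<epsilon>\<^sup>2 + sa x) * g x v t"
    (* initial condition *)
    and init: "\<And>x. x \<in> {xL<..<xR} \<Longrightarrow> vavg nu (\<lambda>v. g x v 0) = 0"
  defines "E \<equiv> \<lambda>t. L2sq xL xR (\<lambda>x. rho x t) + \<epsilon>\<^sup>2 * tnormsq nu xL xR (\<lambda>x v. g x v t)"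
    and "D \<equiv> integral {0..T} (\<lambda>t. integral {xL..xR} (\<lambda>x. sa x * (rho x t)\<^sup>2)
               + vavg nu (\<lambda>v. integral {xL..xR} (\<lambda>x. (ss x + \<epsilon>\<^sup>2 * sa x) * (g x v t)\<^sup>2)))"
  shows "((\<forall>t\<in>{0<..T}. rho xL t = rho xR t \<and> (\<forall>v\<in>\<Omega>v. g xL v t = g xR v t))
            \<longrightarrow> E T = - 2 * D + E 0)
       \<and> ((\<forall>t\<in>{0<..T}. (\<forall>v\<in>\<Omega>v. v > 0 \<longrightarrow> rho xL t + \<epsilon> * g xL v t = 0)
                       \<and> (\<forall>v\<in>\<Omega>v. v < 0 \<longrightarrow> rho xR t + \<epsilon> * g xR v t = 0))
            \<longrightarrow> E T \<le> - 2 * D + E 0)"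
proof -
  interpret micro_macro xL xR T \<epsilon> \<Omega>v nu ss sa rho rho_t rho_x g g_t g_x
    by (rule micro_macro.intro) (rule assms; assumption)+
  have "E = energy" "D = integral {0..T} dissipation"
    unfolding assms(29,30) energy_def[abs_def] dissipation_def[abs_def] by simp_all
  then show ?thesis
    using energy_identity_periodic energy_inequality_inflow by blast
qed

end
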